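(* Let $n\ge 3$ and $\mathbf h\in\mathbb{R}^{\binom{n+1}{2}}$, decomposed as $\mathbf h=(\mathbf h_0,\mathbf h_1,\mathbf h_2)$. Assume $J_{n,2}\mathbf h\ge 0$ and $\mathbf h_2\not\ge 0$. Then $R(J_{n,2}\mathbf h)\ge 3+R_{n-1,2}$.
   Context: For a real vector $\mathbf x$, $R(\mathbf x)$ is the number of nonzero components; inequalities are componentwise and $\mathbf x\not\ge0$ means some component is negative. $J_{m,j}$ is the matrix, with respect to the left lexicographic bases of degree-$j$ and degree-$(j+1)$ monomials in $m$ variables, of multiplication by the sum of the variables. If $\mathbf h$ is the coordinate vector of $A(x)=x_1^2A_0+x_1A_1(x_2,\dots,x_n)+A_2(x_2,\dots,x_n)$ ($A_j$ homogeneous of degree $j$), $\mathbf h_j$ is the coordinate vector of $A_j$ in the left lexicographic basis of degree-$j$ monomials in $x_2,\dots,x_n$. For $m,d\ge1$, $R_{m,d}:=\min\{R(J_{m,d}\mathbf g): \mathbf g\in\mathbb{R}^{\binom{m+d-1}{d}},\ \mathbf g\not\ge 0,\ J_{m,d}\mathbf g\ge 0\}$. *)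

theory Defs
  imports Complex_Main
begin

text \<open>Monomials of degree d in m variables x_1,...,x_m are represented by their
exponent vectors alpha :: nat => nat, where alpha i is the exponent of x_(i+1)
(indices 0..m-1) and alpha i = 0 for i >= m.  A coordinate vector with respect to the
monomial basis of degree d is a function from exponent vectors to reals, of which only
the values on monoms m d matter.  Since the number of nonzero entries and componentwise
sign conditions do not depend on the order of the basis, the left lexicographic order
is not needed explicitly.\<close>

definition monoms :: "nat \<Rightarrow> nat \<Rightarrow> (nat \<Rightarrow> nat) set" where
  "monoms m d = {\<alpha>. (\<forall>i\<ge>m. \<alpha> i = 0) \<and> (\<Sum>i<m. \<alpha> i) = d}"

text \<open>J m g: coefficients of (x_1 + ... + x_m) * G, where g are the coefficients of G.\<close>
definition Jmap :: "nat \<Rightarrow> ((nat \<Rightarrow> nat) \<Rightarrow> real) \<Rightarrow> (nat \<Rightarrow> nat) \<Rightarrow> real" where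
  "Jmap m g \<beta> = (\<Sum>i<m. if 0 < \<beta> i then g (\<beta>(i := \<beta> i - 1)) else 0)"

definition nonneg_on :: "(nat \<Rightarrow> nat) set \<Rightarrow> ((nat \<Rightarrow> nat) \<Rightarrow> real) \<Rightarrow> bool" where
  "nonneg_on S v \<longleftrightarrow> (\<forall>\<alpha>\<in>S. 0 \<le> v \<alpha>)"

definition Rcount :: "(nat \<Rightarrow> nat) set \<Rightarrow> ((nat \<Rightarrow> nat) \<Rightarrow> real) \<Rightarrow> nat" where
  "Rcount S v = card {\<alpha>\<in>S. v \<alpha> \<noteq> 0}"

definition Rmin :: "nat \<Rightarrow> nat \<Rightarrow> nat" where
  "Rmin m d = (LEAST r. \<exists>g. \<not> nonneg_on (monoms m d) g \<and> nonneg_on (monoms m (d+1)) (Jmap m g)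
      \<and> r = Rcount (monoms m (d+1)) (Jmap m g))"

end

theory Submission
  imports Defs
begin

(* Write A = x1^2 A0 + x1 A1 + A2 and let G = (x1 + ... + xn) A have nonnegative
   coefficients. The monomials of G free of x1 are exactly those of (x2 + ... + xn) A2, and
   A2 has a negative coefficient, so at least R(n-1,2) of them are nonzero. If the negative
   coefficient belongs to xj xk, then nonnegativity of G at xj^3, xj^2 xk, xk^2 xj and
   x1 xj xk forces j <> k and positive coefficients of xj^2, xk^2 and (say) x1 xj in A.
   Then G has nonzero coefficients at x1^2 xj, xj^2 x1, and at x1^3 or xk^2 x1: three more,
   all containing x1. *)

lemma Rcount_image: "inj_on f S \<Longrightarrow> Rcount (f ` S) v = Rcount S (v \<circ> f)"
proof -
  assume "inj_on f S"
  moreover have "{\<alpha> \<in> f ` S. v \<alpha> \<noteq> 0} = f ` {\<beta> \<in> S. (v \<circ> f) \<beta> \<noteq> 0}" by auto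
  ultimately show ?thesis
    unfolding Rcount_def by (simp add: card_image inj_on_subset)
qed

lemma nonneg_on_image: "nonneg_on (f ` S) v \<longleftrightarrow> nonneg_on S (v \<circ> f)"
  by (simp add: nonneg_on_def)

lemma Rcount_split:
  assumes "finite S"
  shows "Rcount S v = Rcount {\<alpha> \<in> S. P \<alpha>} v + Rcount {\<alpha> \<in> S. \<not> P \<alpha>} v"
proof -
  have "{\<alpha> \<in> S. v \<alpha> \<noteq> 0} =
      {\<alpha> \<in> {\<alpha> \<in> S. P \<alpha>}. v \<alpha> \<noteq> 0} \<union> {\<alpha> \<in> {\<alpha> \<in> S. \<not> P \<alpha>}. v \<alpha> \<noteq> 0}" by auto
  then show ?thesis
    unfolding Rcount_def using assms by (simp add: card_Un_disjoint disjoint_iff)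
qed

lemma card_le_Rcount: "finite S \<Longrightarrow> A \<subseteq> {\<alpha> \<in> S. v \<alpha> \<noteq> 0} \<Longrightarrow> card A \<le> Rcount S v"
  unfolding Rcount_def by (simp add: card_mono)

lemma Rmin_le_Rcount:
  assumes "\<not> nonneg_on (monoms m d) g" and "nonneg_on (monoms m (d + 1)) (Jmap m g)"
  shows "Rmin m d \<le> Rcount (monoms m (d + 1)) (Jmap m g)"
  unfolding Rmin_def by (rule Least_le) (use assms in blast)

lemma finite_monoms: "finite (monoms m d)"
proof (rule finite_subset)
  show "monoms m d \<subseteq> {\<alpha>. \<forall>i. (i \<in> {..<m} \<longrightarrow> \<alpha> i \<in> {..d}) \<and> (i \<notin> {..<m} \<longrightarrow> \<alpha> i = 0)}"
    by (auto simp: monoms_def intro: member_le_sum[of _ "{..<m}", simplified])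
  show "finite \<dots>" by (rule finite_set_of_finite_funs) auto
qed

lemma monoms_Suc_obtain_var_factor:
  assumes "\<alpha> \<in> monoms m (Suc d)"
  obtains a \<beta> where "a < m" "\<beta> \<in> monoms m d" "\<alpha> = \<beta>(a := Suc (\<beta> a))"
proof -
  have sum: "(\<Sum>i<m. \<alpha> i) = Suc d" and zero: "\<forall>i\<ge>m. \<alpha> i = 0"
    using assms by (auto simp: monoms_def)
  then obtain a where a: "a < m" "0 < \<alpha> a"
    by (metis lessThan_iff neq0_conv sum.neutral nat.distinct(1))
  have "(\<Sum>i<m. (\<alpha>(a := \<alpha> a - 1)) i) = \<alpha> a - 1 + (\<Sum>i\<in>{..<m} - {a}. \<alpha> i)"
    using a by (simp add: sum.remove)
  also have "\<dots> = (\<Sum>i<m. \<alpha> i) - 1"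
    using a by (simp add: sum.remove)
  finally have "\<alpha>(a := \<alpha> a - 1) \<in> monoms m d"
    using a sum zero by (auto simp: monoms_def)
  moreover have "\<alpha> = (\<alpha>(a := \<alpha> a - 1))(a := Suc ((\<alpha>(a := \<alpha> a - 1)) a))"
    using a by auto
  ultimately show ?thesis using that a by blast
qed

lemma monoms_0: "monoms m 0 = {\<lambda>_. 0}"
  by (auto simp: monoms_def fun_eq_iff) (metis lessThan_iff not_le)

definition mon2 :: "nat \<Rightarrow> nat \<Rightarrow> nat \<Rightarrow> nat" where
  "mon2 a b t = of_bool (t = a) + of_bool (t = b)"

definition mon3 :: "nat \<Rightarrow> nat \<Rightarrow> nat \<Rightarrow> nat \<Rightarrow> nat" where
  "mon3 a b c t = of_bool (t = a) + of_bool (t = b) + of_bool (t = c)"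

lemma mon2_commute: "mon2 a b = mon2 b a"
  by (auto simp: mon2_def fun_eq_iff)

lemma mon3_in_monoms: "a < n \<Longrightarrow> b < n \<Longrightarrow> c < n \<Longrightarrow> mon3 a b c \<in> monoms n 3"
  by (simp add: monoms_def mon3_def sum.distrib)

lemma monoms_2_eq_mon2:
  assumes "\<alpha> \<in> monoms n 2"
  obtains a b where "a < n" "b < n" "\<alpha> = mon2 a b"
proof -
  obtain a \<beta> where a: "a < n" "\<beta> \<in> monoms n 1" "\<alpha> = \<beta>(a := Suc (\<beta> a))"
    using assms monoms_Suc_obtain_var_factor[of \<alpha> n 1] by (auto simp: numeral_2_eq_2)
  obtain b \<gamma> where b: "b < n" "\<gamma> \<in> monoms n 0" "\<beta> = \<gamma>(b := Suc (\<gamma> b))"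
    using a(2) monoms_Suc_obtain_var_factor[of \<beta> n 0] by auto
  have "\<alpha> = mon2 a b"
    using a(3) b(2,3) by (simp add: monoms_0 mon2_def fun_eq_iff)
  with a b that show ?thesis by blast
qed

lemma Jmap_eq_sum_support: "Jmap m g \<beta> = (\<Sum>i | i < m \<and> 0 < \<beta> i. g (\<beta>(i := \<beta> i - 1)))"
proof -
  have "{i. i < m \<and> 0 < \<beta> i} = {i \<in> {..<m}. 0 < \<beta> i}" by auto
  then show ?thesis
    unfolding Jmap_def by (simp add: sum.inter_filter[symmetric] del: One_nat_def)
qed

lemma Jmap_mon3_cube: "a < n \<Longrightarrow> Jmap n h (mon3 a a a) = h (mon2 a a)"
proof -
  assume "a < n"
  then have "{i. i < n \<and> 0 < mon3 a a a i} = {a}" by (auto simp: mon3_def)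
  moreover have "(mon3 a a a)(a := mon3 a a a a - 1) = mon2 a a"
    by (auto simp: mon3_def mon2_def)
  ultimately show ?thesis by (simp add: Jmap_eq_sum_support)
qed

lemma Jmap_mon3_square:
  assumes "a < n" "b < n" "a \<noteq> b"
  shows "Jmap n h (mon3 a a b) = h (mon2 a b) + h (mon2 a a)"
proof -
  have "{i. i < n \<and> 0 < mon3 a a b i} = {a, b}" using assms by (auto simp: mon3_def)
  moreover have "(mon3 a a b)(a := mon3 a a b a - 1) = mon2 a b"
    and "(mon3 a a b)(b := mon3 a a b b - 1) = mon2 a a"
    using assms by (auto simp: mon3_def mon2_def)
  ultimately show ?thesis using assms by (simp add: Jmap_eq_sum_support)
qed

lemma Jmap_mon3_distinct:
  assumes "a < n" "b < n" "c < n" "a \<noteq> b" "a \<noteq> c" "b \<noteq> c"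
  shows "Jmap n h (mon3 a b c) = h (mon2 b c) + h (mon2 a c) + h (mon2 a b)"
proof -
  have "{i. i < n \<and> 0 < mon3 a b c i} = {a, b, c}" using assms by (auto simp: mon3_def)
  moreover have "(mon3 a b c)(a := mon3 a b c a - 1) = mon2 b c"
    and "(mon3 a b c)(b := mon3 a b c b - 1) = mon2 a c"
    and "(mon3 a b c)(c := mon3 a b c c - 1) = mon2 a b"
    using assms by (auto simp: mon3_def mon2_def)
  ultimately show ?thesis using assms by (simp add: Jmap_eq_sum_support)
qed

lemma Jmap_mon3_nonneg:
  "nonneg_on (monoms n 3) (Jmap n h) \<Longrightarrow> a < n \<Longrightarrow> b < n \<Longrightarrow> c < n \<Longrightarrow>
    0 \<le> Jmap n h (mon3 a b c)"
  using mon3_in_monoms by (simp add: nonneg_on_def)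

lemma square_coeffs_pos_of_neg_coeff:
  assumes nonneg: "nonneg_on (monoms n 3) (Jmap n h)"
    and "j < n" "k < n" and neg: "h (mon2 j k) < 0"
  shows "j \<noteq> k" and "0 < h (mon2 j j)" and "0 < h (mon2 k k)"
proof -
  note J = Jmap_mon3_nonneg[OF nonneg]
  show "j \<noteq> k"
    using J[of j j j] Jmap_mon3_cube[of j n h] assms by auto
  then show "0 < h (mon2 j j)" and "0 < h (mon2 k k)"
    using J[of j j k] J[of k k j] Jmap_mon3_square[of j n k h] Jmap_mon3_square[of k n j h]
      assms mon2_commute[of k j] by auto
qed

lemma three_le_Rcount_containing_var:
  assumes nonneg: "nonneg_on (monoms n 3) (Jmap n h)"
    and idx: "i < n" "j < n" "k < n" "i \<noteq> j" "i \<noteq> k" "j \<noteq> k"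
    and pos: "0 < h (mon2 i j)" "0 < h (mon2 j j)" "0 < h (mon2 k k)"
  shows "3 \<le> Rcount {\<beta> \<in> monoms n 3. \<beta> i \<noteq> 0} (Jmap n h)"
proof -
  let ?S = "{\<beta> \<in> monoms n 3. \<beta> i \<noteq> 0}"
  note J = Jmap_mon3_nonneg[OF nonneg]
  have ii: "0 \<le> h (mon2 i i)"
    using J[of i i i] Jmap_mon3_cube[of i n h] idx by simp
  have iij: "Jmap n h (mon3 i i j) \<noteq> 0" and jji: "Jmap n h (mon3 j j i) \<noteq> 0"
    using Jmap_mon3_square[of i n j h] Jmap_mon3_square[of j n i h] mon2_commute[of j i]
      idx pos ii by auto
  obtain \<gamma> where \<gamma>: "\<gamma> \<in> {mon3 i i i, mon3 k k i}" "\<gamma> i \<noteq> 0" "Jmap n h \<gamma> \<noteq> 0"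
  proof (cases "h (mon2 i i) = 0")
    case True
    then have "0 \<le> h (mon2 i k)"
      using J[of i i k] Jmap_mon3_square[of i n k h] idx by simp
    then have "Jmap n h (mon3 k k i) \<noteq> 0"
      using Jmap_mon3_square[of k n i h] mon2_commute[of k i] idx pos by auto
    then show ?thesis by (intro that[of "mon3 k k i"]) (auto simp: mon3_def)
  next
    case False
    then show ?thesis
      using Jmap_mon3_cube[of i n h] idx by (intro that[of "mon3 i i i"]) (auto simp: mon3_def)
  qed
  let ?T = "{mon3 i i j, mon3 j j i, \<gamma>}"
  have "?T \<subseteq> {\<beta> \<in> ?S. Jmap n h \<beta> \<noteq> 0}"
    using \<gamma> iij jji idx by (auto simp: mon3_def intro: mon3_in_monoms)
  moreover have "3 \<le> card ?T"
  proof -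
    have "\<gamma> j = 0" using \<gamma>(1) idx by (auto simp: mon3_def)
    then have "(\<lambda>\<beta>. \<beta> j) ` ?T = {1, 2, 0}"
      using idx by (simp add: mon3_def numeral_2_eq_2)
    moreover have "card ((\<lambda>\<beta>. \<beta> j) ` ?T) \<le> card ?T"
      by (rule card_image_le) simp
    ultimately show ?thesis by simp
  qed
  ultimately show ?thesis
    using card_le_Rcount[of ?S ?T] finite_monoms by fastforce
qed

lemma three_le_Rcount_containing_var_of_neg_coeff:
  assumes nonneg: "nonneg_on (monoms n 3) (Jmap n h)"
    and idx: "i < n" "j < n" "k < n" "i \<noteq> j" "i \<noteq> k"
    and neg: "h (mon2 j k) < 0"
  shows "3 \<le> Rcount {\<beta> \<in> monoms n 3. \<beta> i \<noteq> 0} (Jmap n h)"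
proof -
  note sq = square_coeffs_pos_of_neg_coeff[OF nonneg idx(2,3) neg]
  have "0 \<le> Jmap n h (mon3 i j k)"
    using Jmap_mon3_nonneg[OF nonneg] idx by simp
  then have "0 < h (mon2 i j) \<or> 0 < h (mon2 i k)"
    using Jmap_mon3_distinct[of i n j k h] idx sq(1) neg by auto
  then show ?thesis
  proof
    assume "0 < h (mon2 i j)"
    then show ?thesis
      using three_le_Rcount_containing_var[OF nonneg idx sq(1)] sq(2,3) by blast
  next
    assume "0 < h (mon2 i k)"
    then show ?thesis
      using three_le_Rcount_containing_var[OF nonneg idx(1,3,2,5,4) sq(1)[symmetric]] sq(2,3)
      by blast
  qed
qed

definition shift_exp :: "(nat \<Rightarrow> nat) \<Rightarrow> nat \<Rightarrow> nat" where
  "shift_exp \<beta> i = (case i of 0 \<Rightarrow> 0 | Suc j \<Rightarrow> \<beta> j)"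

lemma shift_exp_simps [simp]: "shift_exp \<beta> 0 = 0" "shift_exp \<beta> (Suc i) = \<beta> i"
  by (simp_all add: shift_exp_def)

lemma inj_shift_exp: "inj shift_exp"
  by (rule injI) (metis ext nat.simps(5) shift_exp_def)

lemma shift_exp_image_monoms: "shift_exp ` monoms m d = {\<alpha> \<in> monoms (Suc m) d. \<alpha> 0 = 0}"
proof (intro equalityI subsetI)
  fix \<alpha> assume "\<alpha> \<in> shift_exp ` monoms m d"
  then show "\<alpha> \<in> {\<alpha> \<in> monoms (Suc m) d. \<alpha> 0 = 0}"
    by (auto simp: monoms_def shift_exp_def sum.lessThan_Suc_shift split: nat.split
        simp del: sum.lessThan_Suc)
next
  fix \<alpha> assume \<alpha>: "\<alpha> \<in> {\<alpha> \<in> monoms (Suc m) d. \<alpha> 0 = 0}"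
  then have "\<alpha> = shift_exp (\<lambda>i. \<alpha> (Suc i))"
    by (auto simp: shift_exp_def fun_eq_iff split: nat.split)
  moreover have "(\<lambda>i. \<alpha> (Suc i)) \<in> monoms m d"
    using \<alpha> by (auto simp: monoms_def sum.lessThan_Suc_shift simp del: sum.lessThan_Suc)
  ultimately show "\<alpha> \<in> shift_exp ` monoms m d" by blast
qed

lemma Jmap_shift_exp: "Jmap (Suc m) h (shift_exp \<beta>) = Jmap m (h \<circ> shift_exp) \<beta>"
proof -
  have "(shift_exp \<beta>)(Suc i := \<beta> i - 1) = shift_exp (\<beta>(i := \<beta> i - 1))" for i
    by (auto simp: shift_exp_def fun_eq_iff split: nat.split)
  then show ?thesis
    unfolding Jmap_def sum.lessThan_Suc_shift by (simp del: sum.lessThan_Suc cong: if_cong)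
qed

theorem corollary4p2:
  fixes n :: nat and h :: "(nat \<Rightarrow> nat) \<Rightarrow> real"
  assumes "3 \<le> n"
    and "nonneg_on (monoms n 3) (Jmap n h)"
    and "\<not> nonneg_on {\<alpha>\<in>monoms n 2. \<alpha> 0 = 0} h"
  shows "3 + Rmin (n - 1) 2 \<le> Rcount (monoms n 3) (Jmap n h)"
proof -
  obtain m where n: "n = Suc m" using assms(1) by (cases n) auto
  obtain \<alpha> where \<alpha>: "\<alpha> \<in> monoms n 2" "\<alpha> 0 = 0" "h \<alpha> < 0"
    using assms(3) by (auto simp: nonneg_on_def not_le)
  obtain j k where jk: "j < n" "k < n" "\<alpha> = mon2 j k"
    using monoms_2_eq_mon2[OF \<alpha>(1)] by blast
  have "j \<noteq> 0" "k \<noteq> 0" using \<alpha>(2) jk(3) by (auto simp: mon2_def)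
  then have with_x1: "3 \<le> Rcount {\<beta> \<in> monoms n 3. \<beta> 0 \<noteq> 0} (Jmap n h)"
    using three_le_Rcount_containing_var_of_neg_coeff[OF assms(2), of 0 j k] jk \<alpha>(3) n by auto
  define g where "g = h \<circ> shift_exp"
  have Jmap_g: "Jmap m g = Jmap n h \<circ> shift_exp"
    by (simp add: g_def n fun_eq_iff Jmap_shift_exp)
  have "\<not> nonneg_on (monoms m 2) g"
    using assms(3) by (simp add: g_def n shift_exp_image_monoms flip: nonneg_on_image)
  moreover have "nonneg_on {\<beta> \<in> monoms n 3. \<beta> 0 = 0} (Jmap n h)"
    using assms(2) by (simp add: nonneg_on_def)
  then have "nonneg_on (monoms m 3) (Jmap m g)"
    by (simp add: Jmap_g n shift_exp_image_monoms flip: nonneg_on_image)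
  ultimately have "Rmin m 2 \<le> Rcount (monoms m 3) (Jmap m g)"
    using Rmin_le_Rcount[of m 2 g] by simp
  also have "\<dots> = Rcount {\<beta> \<in> monoms n 3. \<beta> 0 = 0} (Jmap n h)"
    using inj_shift_exp
    by (simp add: Jmap_g n shift_exp_image_monoms inj_on_subset flip: Rcount_image)
  finally show ?thesis
    using Rcount_split[OF finite_monoms, of n 3 "Jmap n h" "\<lambda>\<beta>. \<beta> 0 = 0"] with_x1 n by simp
qed

end
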